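(* The homeomorphism $f$ is such that $\lim_{s \to x^\pm} f'(s)$ exists at all $x \in \mathbb{T}$; $f'$ has exactly one break point of increase, denoted $a_0$, and at most countably many break points of decrease, denoted $\{a_i\}_{i \ge 1}$. This implies that $f'$ is continuous on $\mathbb{T} \setminus \{a_i\}_{i\ge 0}$ with positive one-sided limits everywhere. Furthermore, $f$ is concave on the arc $\mathbb{T} \setminus \{a_0\}$. Finally, $\log f'$ can be extended to a map with bounded variation.
   Context: Setting: an internal-wave billiard (unit-speed point particle in a planar table, reflected so that the angles of incident and reflected velocities with the vertical are equal) in a table of height $1/2$ with horizontal bases, a vertical left side, and right side the graph of a piecewise $C^1$, strictly decreasing, concave function (possibly plus a vertical segment at its lower end). The dynamics is unfolded to a unit-speed linear flow of direction $\theta\in(\alpha_M,\pi/2)$ on a 4-fold copy $\hat D$ of the table whose upper boundary is the graph of an even, piecewise $C^1$, concave function $b:[-1/2,1/2]\to\mathbb{R}^+$ non-increasing on $[0,1/2]$, opposite boundary points identified; $\alpha_M=\arctan b'(-1/2)$. $f:\mathbb{T}\to\mathbb{T}$ ($\mathbb{T}=\mathbb{R}/\mathbb{Z}$) is the first-return map to a horizontal cross-section of length 1; one has $f'(x)=\sin(\theta+\alpha(x_c(x)))/\sin(\theta-\alpha(x_c(x)))$ with $\alpha=\arctan b'$ and $x_c(x)$ the abscissa where the trajectory from $x$ first hits the upper boundary. A break point of $f'$ is an $x$ with $\Delta f'(x):=\lim_{s\to x^+}f'(s)-\lim_{s\to x^-}f'(s)\neq0$; it is of increase if $\Delta f'(x)>0$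 and of decrease if $\Delta f'(x)<0$. *)

theory Defs
  imports "HOL-Analysis.Analysis"
begin

definition piecewise_C1_on :: "(real \<Rightarrow> real) \<Rightarrow> real \<Rightarrow> real \<Rightarrow> bool" where
  "piecewise_C1_on b l u \<longleftrightarrow>
     (\<exists>ps::real list. ps \<noteq> [] \<and> sorted_wrt (<) ps \<and> hd ps = l \<and> last ps = u \<and>
        (\<forall>i < length ps - 1. \<exists>d. continuous_on {ps!i..ps!(i+1)} d \<and>
            (\<forall>x\<in>{ps!i..ps!(i+1)}. (b has_real_derivative d x) (at x within {ps!i..ps!(i+1)}))))"

definition per_ext :: "(real \<Rightarrow> real) \<Rightarrow> real \<Rightarrow> real" where
  "per_ext b X = b (X - real_of_int \<lfloor>X + 1/2\<rfloor>)"

text \<open>Lift to the real line of the abscissa x_c(x) where the trajectory of direction theta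
starting at (x,0) first hits the upper boundary y = b (periodically extended):
the unique X with X - b(X) cot theta = x.\<close>
definition hit_abscissa :: "(real \<Rightarrow> real) \<Rightarrow> real \<Rightarrow> real \<Rightarrow> real" where
  "hit_abscissa b \<theta> x = (THE X. X - per_ext b X * cot \<theta> = x)"

text \<open>Lift F : R -> R of the first-return map f : T -> T to the horizontal cross-section
{y = 0} of the unfolded table {(x,y) : |y| <= b(x)}, upper boundary point (x,b(x)) identified
with (x,-b(x)) and the vertical sides x = -1/2, x = 1/2 identified.
From (x,0) the trajectory hits (x_c, b(x_c)), reappears at (x_c,-b(x_c)) and returns to
y = 0 at x_c + b(x_c) cot theta.\<close>
definition return_lift :: "(real \<Rightarrow> real) \<Rightarrow> real \<Rightarrow> real \<Rightarrow> real" where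
  "return_lift b \<theta> x = hit_abscissa b \<theta> x + per_ext b (hit_abscissa b \<theta> x) * cot \<theta>"

definition diff_points :: "(real \<Rightarrow> real) \<Rightarrow> real set" where
  "diff_points F = {s. F differentiable (at s)}"

definition right_lim_deriv :: "(real \<Rightarrow> real) \<Rightarrow> real \<Rightarrow> real" where
  "right_lim_deriv F x = Lim (at x within ({x<..} \<inter> diff_points F)) (deriv F)"

definition left_lim_deriv :: "(real \<Rightarrow> real) \<Rightarrow> real \<Rightarrow> real" where
  "left_lim_deriv F x = Lim (at x within ({..<x} \<inter> diff_points F)) (deriv F)"

definition jump_deriv :: "(real \<Rightarrow> real) \<Rightarrow> real \<Rightarrow> real" where
  "jump_deriv F x = right_lim_deriv F x - left_lim_deriv F x"

definition bounded_variation_on :: "(real \<Rightarrow> real) \<Rightarrow> real \<Rightarrow> real \<Rightarrow> bool" where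
  "bounded_variation_on h a b \<longleftrightarrow>
     (\<exists>M. \<forall>ps::real list. sorted ps \<and> set ps \<subseteq> {a..b} \<longrightarrow>
        (\<Sum>i < length ps - 1. \<bar>h (ps!(i+1)) - h (ps!i)\<bar>) \<le> M)"

end

theory Submission
  imports Defs
begin

(* Write c = cot theta. The trajectory from (x, 0) hits the upper boundary at the abscissa X(x)
   solving X - c b(X) = x and returns to the cross-section at F(x) = X + c b(X). Concavity and
   evenness bound the chord slopes of b by bM = b'(-1/2), and c bM < 1; hence X is increasing and
   bi-Lipschitz, and every chord slope of F equals (1 + c s) / (1 - c s) for a chord slope s of b,
   so it lies between (1 - c bM) / (1 + c bM) and (1 + c bM) / (1 - c bM). On the period
   [a0, a0 + 1] where X(x) stays in [-1/2, 1/2], the function b(X(x)) solves a fixed-point equation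
   with a concave, contracting right-hand side, so it is concave, and so is F = x + 2 c b(X(x)). At a0
   the trajectory hits the corner, the boundary slope jumps from -bM to bM, and the one-sided
   derivatives of F at a0 are the two extreme slopes above.
   The rest holds for every lift that is concave on one period and has chord slopes in a compact
   subinterval of (0, oo): its one-sided derivatives exist, decrease on each period, are right- resp.
   left-continuous and agree (with F') off a countable set, since a discrepancy off the break points
   is a discontinuity of a monotone function. So F' has one-sided limits everywhere, and log F'
   decreases between consecutive break points and thus has bounded variation. *)

definition slope :: "(real \<Rightarrow> real) \<Rightarrow> real \<Rightarrow> real \<Rightarrow> real" where
  "slope f x y = (f y - f x) / (y - x)"

lemma slope_commute: "slope f x y = slope f y x"
  unfolding slope_def by (metis minus_diff_eq minus_divide_divide)

lemma concave_on_slope_le: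
  assumes "concave_on I f" "x \<in> I" "y \<in> I" "x < t" "t < y"
  shows "slope f x y \<le> slope f x t" and "slope f t y \<le> slope f x y"
proof -
  have flip: "(f v - f u) / (u - v) = - slope f u v" for u v
    unfolding slope_def by (metis minus_diff_eq minus_divide_right)
  show "slope f x y \<le> slope f x t" "slope f t y \<le> slope f x y"
    using convex_on_slope_le[OF assms(1)[unfolded concave_on_def] assms(2-)] by (simp_all add: flip)
qed

lemma concave_on_slope_antimono:
  assumes f: "concave_on I f" and I: "x \<in> I" "y \<in> I" "x' \<in> I" "y' \<in> I"
    and "x < y" "x' < y'" "x \<le> x'" "y \<le> y'"
  shows "slope f x' y' \<le> slope f x y"
proof -
  have "slope f x' y' \<le> slope f x y'"
    using concave_on_slope_le(2)[OF f, of x y' x'] assms by (cases "x = x'") auto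
  also have "\<dots> \<le> slope f x y"
    using concave_on_slope_le(1)[OF f, of x y' y] assms by (cases "y = y'") auto
  finally show ?thesis .
qed

lemma shift_by_int:
  fixes f :: "real \<Rightarrow> real"
  assumes "\<And>x. f (x + 1) = f x + c"
  shows "f (x + of_int k) = f x + of_int k * c"
proof (induction k rule: int_induct[where k = 0])
  case (step1 i)
  then show ?case using assms[of "x + of_int i"] by (simp add: algebra_simps)
next
  case (step2 i)
  then show ?case using assms[of "x + of_int i - 1"] by (simp add: algebra_simps)
qed simp

lemma concave_on_Icc_shift:
  fixes f g :: "real \<Rightarrow> real"
  assumes "concave_on {a..b} f" and "\<And>x. g x = f (x - d) + e"
  shows "concave_on {a + d..b + d} g"
  unfolding concave_on_iff
proof (intro conjI ballI allI impI)
  fix x y u v :: real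
  assume "x \<in> {a + d..b + d}" "y \<in> {a + d..b + d}" "0 \<le> u" "0 \<le> v" and uv: "u + v = 1"
  then have "u * f (x - d) + v * f (y - d) \<le> f (u * (x - d) + v * (y - d))"
    using assms(1) unfolding concave_on_iff by auto
  moreover have "u * (x - d) + v * (y - d) = u * x + v * y - (u + v) * d"
    "u * (f (x - d) + e) + v * (f (y - d) + e) = u * f (x - d) + v * f (y - d) + (u + v) * e"
    by (simp_all add: algebra_simps)
  ultimately show "u * g x + v * g y \<le> g (u *\<^sub>R x + v *\<^sub>R y)"
    unfolding assms(2) uv by simp
qed (rule convex_real_interval)

lemma lipschitz_on_periodic_shift:
  fixes f :: "real \<Rightarrow> real"
  assumes periodic: "\<And>x. f (x + 1) = f x" and lip: "L-lipschitz_on {a..a+1} f"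
  shows "L-lipschitz_on {a + of_int k..a + of_int k + 1} f"
proof (rule lipschitz_onI)
  fix x y assume "x \<in> {a + of_int k..a + of_int k + 1}" "y \<in> {a + of_int k..a + of_int k + 1}"
  then have "dist (f (x - of_int k)) (f (y - of_int k)) \<le> L * dist (x - of_int k) (y - of_int k)"
    using lipschitz_onD[OF lip] by auto
  then show "dist (f x) (f y) \<le> L * dist x y"
    using shift_by_int[of f 0 "x - of_int k" k] shift_by_int[of f 0 "y - of_int k" k] periodic
    by (simp add: dist_real_def)
qed (use lip in \<open>simp add: lipschitz_on_def\<close>)

lemma lipschitz_on_periodic:
  fixes f :: "real \<Rightarrow> real"
  assumes periodic: "\<And>x. f (x + 1) = f x" and lip: "L-lipschitz_on {a..a+1} f"
  shows "L-lipschitz_on UNIV f"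
proof -
  have periods: "L-lipschitz_on {a + of_int k..a + of_int k + of_nat n} f" for k n
  proof (induction n)
    case 0
    show ?case using lip by (auto simp: lipschitz_on_def)
  next
    case (Suc n)
    have "L-lipschitz_on {a + of_int k + of_nat n..a + of_int k + of_nat n + 1} f"
      using lipschitz_on_periodic_shift[OF periodic lip, of "k + int n"] by (simp add: add.assoc)
    then have "L-lipschitz_on {a + of_int k..a + of_int k + of_nat n + 1}
        (\<lambda>x. if x \<le> a + of_int k + of_nat n then f x else f x)"
      using lipschitz_on_concat[OF Suc] by blast
    then show ?case by (simp add: algebra_simps)
  qed
  show ?thesis
  proof (rule lipschitz_onI)
    fix x y :: real
    define k where "k = \<lfloor>min x y - a\<rfloor>"
    obtain n :: nat where "\<bar>x - y\<bar> + 1 \<le> of_nat n" using real_arch_simple by blast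
    moreover have "a + of_int k \<le> min x y" "min x y < a + of_int k + 1"
      unfolding k_def by linarith+
    moreover have "min x y \<le> x" "x \<le> min x y + \<bar>x - y\<bar>" "min x y \<le> y" "y \<le> min x y + \<bar>x - y\<bar>"
      by (simp_all add: min_def abs_if)
    ultimately have "x \<in> {a + of_int k..a + of_int k + of_nat n}" "y \<in> {a + of_int k..a + of_int k + of_nat n}"
      unfolding atLeastAtMost_iff by linarith+
    then show "dist (f x) (f y) \<le> L * dist x y" by (rule lipschitz_onD[OF periods])
  qed (use lip in \<open>simp add: lipschitz_on_def\<close>)
qed

lemma bounded_variation_on_mono:
  assumes "mono_on {a..b} w"
  shows "bounded_variation_on w a b"
  unfolding bounded_variation_on_def
proof (intro exI allI impI)
  fix ps :: "real list" assume ps: "sorted ps \<and> set ps \<subseteq> {a..b}"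
  then have mem: "ps ! i \<in> {a..b}" if "i < length ps" for i
    using nth_mem[OF that] by blast
  have step: "w (ps ! i) \<le> w (ps ! Suc i)" if "Suc i < length ps" for i
    using mono_onD[OF assms mem mem] ps that by (simp add: sorted_iff_nth_mono)
  have "(\<Sum>i < length ps - 1. \<bar>w (ps!(i+1)) - w (ps!i)\<bar>) = (\<Sum>i < length ps - 1. w (ps!Suc i) - w (ps!i))"
    using step by (intro sum.cong) auto
  also have "\<dots> = w (ps ! (length ps - 1)) - w (ps ! 0)"
    by (rule sum_lessThan_telescope)
  also have "\<dots> \<le> \<bar>w b - w a\<bar>"
  proof (cases "length ps - 1 = 0")
    case False
    then have "0 < length ps" "length ps - 1 < length ps" by auto
    then have "ps ! 0 \<in> {a..b}" "ps ! (length ps - 1) \<in> {a..b}"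
      by (blast intro: mem)+
    then have "w a \<le> w (ps ! 0)" "w (ps ! (length ps - 1)) \<le> w b"
      by (auto intro!: mono_onD[OF assms])
    then show ?thesis by linarith
  qed simp
  finally show "(\<Sum>i < length ps - 1. \<bar>w (ps!(i+1)) - w (ps!i)\<bar>) \<le> \<bar>w b - w a\<bar>" .
qed

lemma bounded_variation_on_diff:
  assumes "bounded_variation_on f a b" "bounded_variation_on g a b"
  shows "bounded_variation_on (\<lambda>x. f x - g x) a b"
proof -
  obtain Mf Mg where
    "\<forall>ps. sorted ps \<and> set ps \<subseteq> {a..b} \<longrightarrow> (\<Sum>i < length ps - 1. \<bar>f (ps!(i+1)) - f (ps!i)\<bar>) \<le> Mf"
    "\<forall>ps. sorted ps \<and> set ps \<subseteq> {a..b} \<longrightarrow> (\<Sum>i < length ps - 1. \<bar>g (ps!(i+1)) - g (ps!i)\<bar>) \<le> Mg"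
    using assms unfolding bounded_variation_on_def by blast
  moreover have "(\<Sum>i < n. \<bar>(f (ps!(i+1)) - g (ps!(i+1))) - (f (ps!i) - g (ps!i))\<bar>)
      \<le> (\<Sum>i < n. \<bar>f (ps!(i+1)) - f (ps!i)\<bar>) + (\<Sum>i < n. \<bar>g (ps!(i+1)) - g (ps!i)\<bar>)" for n ps
    unfolding sum.distrib[symmetric] by (rule sum_mono) linarith
  ultimately show ?thesis
    unfolding bounded_variation_on_def by (intro exI[of _ "Mf + Mg"]) (meson add_mono order_trans)
qed

text \<open>Adding a step of height \<open>2 K\<close> at \<open>c\<close> makes \<open>- h\<close> increasing on all of \<open>{a..b}\<close>.\<close>
lemma bounded_variation_on_antimono_pieces:
  assumes "a \<le> c" "c \<le> b" "antimono_on {a..<c} h" "antimono_on {c..b} h"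
    and bound: "\<And>x. x \<in> {a..b} \<Longrightarrow> \<bar>h x\<bar> \<le> K"
  shows "bounded_variation_on h a b"
proof -
  define s where "s x = (if c \<le> x then 2 * K else 0)" for x
  have "mono_on {a..b} s"
    using bound[of a] assms(1,2) by (intro mono_onI) (auto simp: s_def)
  moreover have "mono_on {a..b} (\<lambda>x. s x - h x)"
  proof (intro mono_onI)
    fix x y assume "x \<in> {a..b}" "y \<in> {a..b}" "x \<le> y"
    then show "s x - h x \<le> s y - h y"
      using monotone_onD[OF assms(3), of x y] monotone_onD[OF assms(4), of x y] bound[of x] bound[of y]
      by (cases "c \<le> x"; cases "c \<le> y") (auto simp: s_def)
  qed
  ultimately have "bounded_variation_on (\<lambda>x. s x - (s x - h x)) a b"
    by (intro bounded_variation_on_diff bounded_variation_on_mono)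
  then show ?thesis by simp
qed

lemma islimpt_greaterThan_diff_countable:
  fixes x :: real
  assumes "countable C"
  shows "x islimpt ({x<..} - C)"
  unfolding islimpt_approachable
proof (intro allI impI)
  fix e :: real assume "e > 0"
  then have "\<not> {x<..<x+e} \<subseteq> C"
    using uncountable_open_interval[of x "x+e"] countable_subset assms by auto
  then obtain y where "y \<in> {x<..<x+e}" "y \<notin> C" by blast
  then show "\<exists>y\<in>{x<..} - C. y \<noteq> x \<and> dist y x < e"
    by (intro bexI[of _ y]) (auto simp: dist_real_def)
qed

lemma islimpt_lessThan_diff_countable:
  fixes x :: real
  assumes "countable C"
  shows "x islimpt ({..<x} - C)"
  unfolding islimpt_approachable
proof (intro allI impI)
  fix e :: real assume "e > 0"
  then have "\<not> {x-e<..<x} \<subseteq> C"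
    using uncountable_open_interval[of "x-e" x] countable_subset assms by auto
  then obtain y where "y \<in> {x-e<..<x}" "y \<notin> C" by blast
  then show "\<exists>y\<in>{..<x} - C. y \<noteq> x \<and> dist y x < e"
    by (intro bexI[of _ y]) (auto simp: dist_real_def)
qed

lemma eventually_at_left_less: "eventually (\<lambda>t. t < x) (at_left x)"
  by (simp add: eventually_at_filter)

text \<open>At \<open>x = u x1 + v x2\<close> let \<open>Y = u y x1 + v y x2\<close>. Concavity gives \<open>\<phi> (x + c Y) \<ge> Y\<close>,
  while \<open>\<phi>\<close> changes by less than \<open>Y - y x\<close> between \<open>x + c y x\<close> and \<open>x + c Y\<close>; so \<open>y x < Y\<close>
  is impossible.\<close>
lemma concave_on_implicit:
  fixes \<phi> y :: "real \<Rightarrow> real"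
  assumes \<phi>: "concave_on J \<phi>" "L-lipschitz_on J \<phi>" and c: "0 \<le> c" "c * L < 1"
    and I: "convex I" and in_J: "\<And>x. x \<in> I \<Longrightarrow> x + c * y x \<in> J"
    and y: "\<And>x. x \<in> I \<Longrightarrow> y x = \<phi> (x + c * y x)"
  shows "concave_on I y"
  unfolding concave_on_iff
proof (intro conjI ballI allI impI I)
  fix x1 x2 u v :: real
  assume x12: "x1 \<in> I" "x2 \<in> I" and uv: "0 \<le> u" "0 \<le> v" "u + v = 1"
  define x where "x = u * x1 + v * x2"
  define Y where "Y = u * y x1 + v * y x2"
  define Z where "Z = x + c * Y"
  define W where "W = x + c * y x"
  have "x \<in> I" using I x12 uv unfolding x_def convex_def by auto
  then have W: "W \<in> J" "\<phi> W = y x" using in_J y unfolding W_def by auto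
  have Z_comb: "Z = u * (x1 + c * y x1) + v * (x2 + c * y x2)"
    unfolding Z_def x_def Y_def by (simp add: algebra_simps)
  then have Z: "Z \<in> J"
    using concave_on_imp_convex[OF \<phi>(1)] in_J x12 uv unfolding convex_def by auto
  have "u * \<phi> (x1 + c * y x1) + v * \<phi> (x2 + c * y x2) \<le> \<phi> Z"
    using \<phi>(1) in_J[OF x12(1)] in_J[OF x12(2)] uv unfolding concave_on_iff real_scaleR_def Z_comb
    by blast
  then have "Y \<le> \<phi> Z" unfolding Y_def using y x12 by simp
  have "\<phi> Z - \<phi> W \<le> L * \<bar>Z - W\<bar>"
    using lipschitz_onD[OF \<phi>(2) Z W(1)] by (simp add: dist_real_def)
  show "u * y x1 + v * y x2 \<le> y (u *\<^sub>R x1 + v *\<^sub>R x2)"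
  proof (rule ccontr)
    assume "\<not> ?thesis"
    then have gap: "0 < Y - y x" unfolding Y_def x_def by simp
    have "Z - W = c * (Y - y x)" unfolding Z_def W_def by (simp add: algebra_simps)
    then have "L * \<bar>Z - W\<bar> = (c * L) * (Y - y x)" using c gap by simp
    then have "\<phi> Z - \<phi> W \<le> (c * L) * (Y - y x)"
      using \<open>\<phi> Z - \<phi> W \<le> L * \<bar>Z - W\<bar>\<close> by linarith
    also have "\<dots> < Y - y x" using c gap by simp
    finally show False using \<open>Y \<le> \<phi> Z\<close> W(2) by simp
  qed
qed

lemma per_ext_periodic: "per_ext b (X + 1) = per_ext b X"
proof -
  have "\<lfloor>X + 1 + 1/2\<rfloor> = \<lfloor>X + 1/2\<rfloor> + 1"
    by (metis add.commute add.left_commute one_add_floor)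
  then show ?thesis unfolding per_ext_def by simp
qed

lemma per_ext_eq:
  assumes "b (-1/2) = b (1/2)" "X \<in> {-1/2..1/2}"
  shows "per_ext b X = b X"
proof (cases "X = 1/2")
  case False
  then have "\<lfloor>X + 1/2\<rfloor> = 0" using assms(2) by (simp add: floor_eq_iff)
  then show ?thesis unfolding per_ext_def by simp
next
  case True
  then show ?thesis unfolding True per_ext_def using assms(1) by simp
qed

lemma per_ext_mem: "per_ext b X \<in> b ` {-1/2..1/2}"
  unfolding per_ext_def by (intro imageI) (simp, linarith)

locale concave_lift =
  fixes F :: "real \<Rightarrow> real" and a0 m M A B :: real
  assumes lift_periodic: "\<And>x. F (x + 1) = F x + 1"
    and concave_fundamental: "concave_on {a0..a0+1} F"
    and slope_bounds: "\<And>s t. s < t \<Longrightarrow> m \<le> slope F s t \<and> slope F s t \<le> M"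
    and m_pos: "0 < m"
    and right_slope_a0: "(slope F a0 \<longlongrightarrow> A) (at_right a0)"
    and left_slope_a0: "(slope F a0 \<longlongrightarrow> B) (at_left a0)"
    and break_increase: "B < A"
begin

lemma lift_shift_int: "F (x + of_int k) = F x + of_int k"
  using shift_by_int[of F 1] lift_periodic by simp

lemma concave_on_period: "concave_on {a0 + of_int k..a0 + of_int k + 1} F"
proof -
  have "F x = F (x - of_int k) + of_int k" for x
    using lift_shift_int[of "x - of_int k" k] by simp
  from concave_on_Icc_shift[OF concave_fundamental this] show ?thesis
    by (simp add: add_ac)
qed

lemma period_right_of:
  obtains u where "concave_on {u..u+1} F" "u \<le> x" "x < u + 1"
  using concave_on_period[of "\<lfloor>x - a0\<rfloor>"] that[of "a0 + of_int \<lfloor>x - a0\<rfloor>"] by linarith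

lemma period_left_of:
  obtains u where "concave_on {u..u+1} F" "u < x" "x \<le> u + 1"
  using concave_on_period[of "\<lceil>x - a0\<rceil> - 1"] that[of "a0 + of_int (\<lceil>x - a0\<rceil> - 1)"] by linarith

lemma period_around:
  assumes "x \<notin> range (\<lambda>k. a0 + of_int k)"
  obtains u where "concave_on {u..u+1} F" "u < x" "x < u + 1"
proof -
  have "x \<noteq> a0 + of_int \<lfloor>x - a0\<rfloor>" using assms by auto
  then show ?thesis
    using concave_on_period[of "\<lfloor>x - a0\<rfloor>"] that[of "a0 + of_int \<lfloor>x - a0\<rfloor>"] by linarith
qed

lemma lift_increment_bounds:
  assumes "s < t"
  shows "0 < F t - F s" and "F t - F s \<le> M * (t - s)"
proof -
  have "m * (t - s) \<le> F t - F s" "F t - F s \<le> M * (t - s)"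
    using slope_bounds[OF assms] assms by (simp_all add: slope_def field_simps)
  moreover have "0 < m * (t - s)" using m_pos assms by simp
  ultimately show "0 < F t - F s" "F t - F s \<le> M * (t - s)" by simp_all
qed

lemma lift_strict_mono: "strict_mono F"
  using lift_increment_bounds(1) by (intro strict_monoI) simp

lemma lift_continuous: "continuous_on UNIV F"
proof (rule lipschitz_on_continuous_on)
  have "\<bar>F t - F s\<bar> \<le> M * \<bar>t - s\<bar>" for s t
    using lift_increment_bounds[of s t] lift_increment_bounds[of t s]
    by (cases s t rule: linorder_cases) simp_all
  moreover have "0 \<le> M" using slope_bounds[of 0 1] m_pos by linarith
  ultimately show "M-lipschitz_on UNIV F"
    by (intro lipschitz_onI) (auto simp: dist_real_def abs_minus_commute)
qed

definition right_deriv :: "real \<Rightarrow> real" where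
  "right_deriv x = Lim (at_right x) (slope F x)"

definition left_deriv :: "real \<Rightarrow> real" where
  "left_deriv x = Lim (at_left x) (slope F x)"

lemma right_deriv: "(slope F x \<longlongrightarrow> right_deriv x) (at_right x)"
proof -
  obtain u where u: "concave_on {u..u+1} F" "u \<le> x" "x < u + 1" by (rule period_right_of)
  let ?I = "{x<..} \<inter> {..<u+1}"
  have "((\<lambda>t. - slope F x t) \<longlongrightarrow> Inf ((\<lambda>t. - slope F x t) ` ?I)) (at x within ?I)"
  proof (rule Lim_right_bound[where K = "- M"])
    fix s t assume "s \<in> {..<u+1}" "t \<in> {..<u+1}" "x < s" "s \<le> t"
    then show "- slope F x s \<le> - slope F x t"
      using concave_on_slope_antimono[OF u(1), of x s x t] u by auto
  qed (use slope_bounds in simp)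
  moreover have "at x within ?I = at_right x"
    by (rule at_within_nhd[of _ "{..<u+1}"]) (use u in auto)
  ultimately have "(slope F x \<longlongrightarrow> - Inf ((\<lambda>t. - slope F x t) ` ?I)) (at_right x)"
    using tendsto_minus by fastforce
  then show ?thesis
    unfolding right_deriv_def by (simp add: tendsto_Lim[OF trivial_limit_at_right_real])
qed

lemma left_deriv: "(slope F x \<longlongrightarrow> left_deriv x) (at_left x)"
proof -
  obtain u where u: "concave_on {u..u+1} F" "u < x" "x \<le> u + 1" by (rule period_left_of)
  let ?I = "{..<x} \<inter> {u<..}"
  have "((\<lambda>t. - slope F x t) \<longlongrightarrow> Sup ((\<lambda>t. - slope F x t) ` ?I)) (at x within ?I)"
  proof (rule Lim_left_bound[where K = "- m"])
    fix s t assume "s \<in> {u<..}" "t \<in> {u<..}" "t < x" "s \<le> t"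
    then show "- slope F x s \<le> - slope F x t"
      using concave_on_slope_antimono[OF u(1), of s x t x] u by (auto simp: slope_commute)
  qed (use slope_bounds in \<open>simp add: slope_commute\<close>)
  moreover have "at x within ?I = at_left x"
    by (rule at_within_nhd[of _ "{u<..}"]) (use u in auto)
  ultimately have "(slope F x \<longlongrightarrow> - Sup ((\<lambda>t. - slope F x t) ` ?I)) (at_left x)"
    using tendsto_minus by fastforce
  then show ?thesis
    unfolding left_deriv_def by (simp add: tendsto_Lim[OF trivial_limit_at_left_real])
qed

lemma right_deriv_eqI: "(slope F x \<longlongrightarrow> l) (at_right x) \<Longrightarrow> right_deriv x = l"
  using tendsto_unique[OF trivial_limit_at_right_real right_deriv] by blast

lemma left_deriv_eqI: "(slope F x \<longlongrightarrow> l) (at_left x) \<Longrightarrow> left_deriv x = l"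
  using tendsto_unique[OF trivial_limit_at_left_real left_deriv] by blast

lemma slope_le_right_deriv:
  assumes "concave_on {u..v} F" "u \<le> x" "x < t" "t \<le> v"
  shows "slope F x t \<le> right_deriv x"
proof (rule tendsto_lowerbound[OF right_deriv])
  show "eventually (\<lambda>s. slope F x t \<le> slope F x s) (at_right x)"
    unfolding eventually_at_right_field
    using concave_on_slope_antimono[OF assms(1), of x _ x t] assms by (intro exI[of _ t]) auto
qed simp

lemma right_deriv_le_slope:
  assumes "concave_on {u..v} F" "u \<le> s" "s < x" "x < v"
  shows "right_deriv x \<le> slope F s x"
proof (rule tendsto_upperbound[OF right_deriv])
  show "eventually (\<lambda>r. slope F x r \<le> slope F s x) (at_right x)"
    unfolding eventually_at_right_field
    using concave_on_slope_antimono[OF assms(1), of s x x] assms by (intro exI[of _ v]) auto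
qed simp

lemma left_deriv_le_slope:
  assumes "concave_on {u..v} F" "u \<le> s" "s < x" "x \<le> v"
  shows "left_deriv x \<le> slope F s x"
proof (rule tendsto_upperbound[OF left_deriv])
  show "eventually (\<lambda>r. slope F x r \<le> slope F s x) (at_left x)"
    unfolding eventually_at_left_field
    using concave_on_slope_antimono[OF assms(1), of s x _ x] assms
    by (intro exI[of _ s]) (auto simp: slope_commute)
qed simp

lemma slope_le_left_deriv:
  assumes "concave_on {u..v} F" "u < x" "x < t" "t \<le> v"
  shows "slope F x t \<le> left_deriv x"
proof (rule tendsto_lowerbound[OF left_deriv])
  show "eventually (\<lambda>r. slope F x t \<le> slope F x r) (at_left x)"
    unfolding eventually_at_left_field
    using concave_on_slope_antimono[OF assms(1), of _ x x t] assms
    by (intro exI[of _ u]) (auto simp: slope_commute)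
qed simp

lemma right_deriv_le_left_deriv:
  assumes "concave_on {u..v} F" "u < x" "x < v"
  shows "right_deriv x \<le> left_deriv x"
proof (rule tendsto_upperbound[OF right_deriv])
  show "eventually (\<lambda>t. slope F x t \<le> left_deriv x) (at_right x)"
    unfolding eventually_at_right_field
    using slope_le_left_deriv[OF assms(1,2)] assms by (intro exI[of _ v]) auto
qed simp

lemma right_deriv_antimono:
  assumes "concave_on {u..v} F" "u \<le> x" "x \<le> y" "y < v"
  shows "right_deriv y \<le> right_deriv x"
proof (cases "x = y")
  case False
  then have "right_deriv y \<le> slope F x y" "slope F x y \<le> right_deriv x"
    using right_deriv_le_slope[OF assms(1)] slope_le_right_deriv[OF assms(1)] assms by auto
  then show ?thesis by linarith
qed simp

lemma left_deriv_antimono: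
  assumes "concave_on {u..v} F" "u < x" "x \<le> y" "y \<le> v"
  shows "left_deriv y \<le> left_deriv x"
proof (cases "x = y")
  case False
  then have "left_deriv y \<le> slope F x y" "slope F x y \<le> left_deriv x"
    using left_deriv_le_slope[OF assms(1)] slope_le_left_deriv[OF assms(1)] assms by auto
  then show ?thesis by linarith
qed simp

lemma right_deriv_bounds: "m \<le> right_deriv x \<and> right_deriv x \<le> M"
  using slope_bounds
  by (intro conjI tendsto_lowerbound[OF right_deriv] tendsto_upperbound[OF right_deriv])
    (auto simp: eventually_at_right_field intro!: exI[of _ "x + 1"])

lemma left_deriv_bounds: "m \<le> left_deriv x \<and> left_deriv x \<le> M"
  using slope_bounds
  by (intro conjI tendsto_lowerbound[OF left_deriv] tendsto_upperbound[OF left_deriv])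
    (auto simp: eventually_at_left_field slope_commute[of F x] intro!: exI[of _ "x - 1"])

lemma slope_shift: "slope F (x + 1) = (\<lambda>t. slope F x (t - 1))"
proof
  fix t
  have "F t = F (t - 1) + 1" using lift_periodic[of "t - 1"] by simp
  then show "slope F (x + 1) t = slope F x (t - 1)"
    unfolding slope_def lift_periodic by simp
qed

lemma right_deriv_periodic: "right_deriv (x + 1) = right_deriv x"
proof (rule right_deriv_eqI)
  have "filterlim (\<lambda>t. t - 1) (at_right x) (at_right (x + 1))"
    unfolding filterlim_def filtermap_at_right_shift by simp
  from filterlim_compose[OF right_deriv this]
  show "(slope F (x + 1) \<longlongrightarrow> right_deriv x) (at_right (x + 1))"
    by (simp add: slope_shift)
qed

lemma left_deriv_periodic: "left_deriv (x + 1) = left_deriv x"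
proof (rule left_deriv_eqI)
  have "filterlim (\<lambda>t. t - 1) (at_left x) (at_left (x + 1))"
    unfolding filterlim_def filtermap_at_left_shift by simp
  from filterlim_compose[OF left_deriv this]
  show "(slope F (x + 1) \<longlongrightarrow> left_deriv x) (at_left (x + 1))"
    by (simp add: slope_shift)
qed

lemma right_deriv_break: "right_deriv (a0 + of_int k) = A"
  using shift_by_int[of right_deriv 0 a0 k] right_deriv_periodic right_deriv_eqI[OF right_slope_a0]
  by simp

lemma left_deriv_break: "left_deriv (a0 + of_int k) = B"
  using shift_by_int[of left_deriv 0 a0 k] left_deriv_periodic left_deriv_eqI[OF left_slope_a0]
  by simp

lemma one_sided_derivs_eq_deriv:
  assumes "F differentiable (at x)"
  shows "right_deriv x = deriv F x" and "left_deriv x = deriv F x"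
proof -
  have "(slope F x \<longlongrightarrow> deriv F x) (at x)"
    using assms DERIV_deriv_iff_real_differentiable
    unfolding has_field_derivative_iff slope_def[abs_def] by blast
  then show "right_deriv x = deriv F x" "left_deriv x = deriv F x"
    unfolding filterlim_at_split by (auto intro: right_deriv_eqI left_deriv_eqI)
qed

lemma has_real_derivative_if_one_sided_eq:
  assumes "right_deriv x = left_deriv x"
  shows "(F has_real_derivative right_deriv x) (at x)"
  unfolding has_field_derivative_iff filterlim_at_split
  using right_deriv[of x] left_deriv[of x] assms by (simp add: slope_def[abs_def])

lemma diff_point_if_one_sided_eq:
  assumes "right_deriv x = left_deriv x"
  shows "x \<in> diff_points F" and "deriv F x = right_deriv x"
  using has_real_derivative_if_one_sided_eq[OF assms]
  by (auto simp: diff_points_def real_differentiable_def DERIV_imp_deriv)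

lemma left_deriv_le_right_deriv_of_less:
  assumes "concave_on {u..v} F" "u \<le> t" "t < x" "x \<le> v"
  shows "left_deriv x \<le> right_deriv t"
  using left_deriv_le_slope[OF assms] slope_le_right_deriv[OF assms] by linarith

lemma right_deriv_eq_left_deriv_if_continuous:
  assumes u: "concave_on {u..v} F" "u < x" "x < v"
    and cont: "continuous (at x within {u<..<v}) right_deriv"
  shows "right_deriv x = left_deriv x"
proof (rule antisym)
  show "right_deriv x \<le> left_deriv x" by (rule right_deriv_le_left_deriv[OF u])
  have "(right_deriv \<longlongrightarrow> right_deriv x) (at x within {u<..<x})"
    using cont unfolding continuous_within by (rule tendsto_within_subset) (use u in auto)
  moreover have "at x within {u<..<x} = at_left x"
    by (rule at_within_nhd[of _ "{u<..}"]) (use u in auto)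
  moreover have "eventually (\<lambda>t. left_deriv x \<le> right_deriv t) (at_left x)"
    unfolding eventually_at_left_field using u
    by (intro exI[of _ u]) (auto intro: left_deriv_le_right_deriv_of_less[OF u(1)])
  ultimately show "left_deriv x \<le> right_deriv x"
    by (intro tendsto_lowerbound[of right_deriv _ "at_left x"]) auto
qed

lemma countable_corners: "countable {x. right_deriv x \<noteq> left_deriv x}"
proof -
  define J where "J k = {a0 + of_int k<..<a0 + of_int k + 1}" for k :: int
  have "mono_on (J k) (\<lambda>x. - right_deriv x)" for k
    using right_deriv_antimono[OF concave_on_period[of k]] by (intro mono_onI) (auto simp: J_def)
  then have "countable (\<Union>k. {x \<in> J k. \<not> continuous (at x within J k) (\<lambda>x. - right_deriv x)})"
    by (intro countable_UN[OF countableI_type] mono_on_ctble_discont)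
  moreover have "{x. right_deriv x \<noteq> left_deriv x} \<subseteq> range (\<lambda>k. a0 + of_int k) \<union>
      (\<Union>k. {x \<in> J k. \<not> continuous (at x within J k) (\<lambda>x. - right_deriv x)})"
  proof
    fix x assume corner: "x \<in> {x. right_deriv x \<noteq> left_deriv x}"
    define k where "k = \<lfloor>x - a0\<rfloor>"
    have "a0 + of_int k \<le> x" "x < a0 + of_int k + 1" unfolding k_def by linarith+
    then have "x = a0 + of_int k \<or> x \<in> J k" unfolding J_def by auto
    moreover have "\<not> continuous (at x within J k) (\<lambda>x. - right_deriv x)" if "x \<in> J k"
      using right_deriv_eq_left_deriv_if_continuous[OF concave_on_period[of k]] that corner
        continuous_minus[of _ "\<lambda>x. - right_deriv x"]
      by (auto simp: J_def)
    ultimately show "x \<in> range (\<lambda>k. a0 + of_int k) \<union>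
      (\<Union>k. {x \<in> J k. \<not> continuous (at x within J k) (\<lambda>x. - right_deriv x)})"
      by blast
  qed
  ultimately show ?thesis
    by (meson countable_Un countable_image countableI_type countable_subset)
qed

lemma lift_tendsto: "(F \<longlongrightarrow> F x) (at x)"
  using lift_continuous unfolding continuous_on_def by simp

lemma right_deriv_continuous_from_right: "(right_deriv \<longlongrightarrow> right_deriv x) (at_right x)"
proof (rule order_tendstoI)
  obtain u where u: "concave_on {u..u+1} F" "u \<le> x" "x < u + 1" by (rule period_right_of)
  show "eventually (\<lambda>t. right_deriv t < y) (at_right x)" if "right_deriv x < y" for y
    unfolding eventually_at_right_field
    using le_less_trans[OF right_deriv_antimono[OF u(1,2)] that] u by (intro exI[of _ "u + 1"]) auto
  show "eventually (\<lambda>t. y < right_deriv t) (at_right x)" if y: "y < right_deriv x" for y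
  proof -
    obtain b where b: "x < b" "\<And>t. x < t \<Longrightarrow> t < b \<Longrightarrow> y < slope F x t"
      using order_tendstoD(1)[OF right_deriv y] unfolding eventually_at_right_field by blast
    define t' where "t' = (x + min b (u + 1)) / 2"
    have t': "x < t'" "t' < u + 1" "y < slope F x t'"
      using b u unfolding t'_def by auto
    have "(F \<longlongrightarrow> F x) (at_right x)"
      using lift_tendsto filterlim_at_split by blast
    then have "((\<lambda>s. slope F s t') \<longlongrightarrow> slope F x t') (at_right x)"
      unfolding slope_def using t' by (intro tendsto_intros) auto
    then have "eventually (\<lambda>s. y < slope F s t') (at_right x)"
      using t' by (intro order_tendstoD(1)) auto
    moreover have "eventually (\<lambda>s. x < s \<and> s < t') (at_right x)"
      unfolding eventually_at_right_field using t' by (intro exI[of _ t']) auto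
    ultimately show ?thesis
    proof eventually_elim
      case (elim s)
      then show ?case using slope_le_right_deriv[OF u(1), of s t'] u t' by auto
    qed
  qed
qed

lemma left_deriv_continuous_from_left: "(left_deriv \<longlongrightarrow> left_deriv x) (at_left x)"
proof (rule order_tendstoI)
  obtain u where u: "concave_on {u..u+1} F" "u < x" "x \<le> u + 1" by (rule period_left_of)
  show "eventually (\<lambda>t. y < left_deriv t) (at_left x)" if "y < left_deriv x" for y
    unfolding eventually_at_left_field
    using less_le_trans[OF that left_deriv_antimono[OF u(1)]] u by (intro exI[of _ u]) auto
  show "eventually (\<lambda>t. left_deriv t < y) (at_left x)" if y: "left_deriv x < y" for y
  proof -
    obtain b where b: "b < x" "\<And>t. b < t \<Longrightarrow> t < x \<Longrightarrow> slope F x t < y"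
      using order_tendstoD(2)[OF left_deriv y] unfolding eventually_at_left_field by blast
    define t' where "t' = (x + max b u) / 2"
    have "t' < x" "u < t'" "slope F x t' < y"
      using b u unfolding t'_def by auto
    then have t': "t' < x" "u < t'" "slope F t' x < y"
      by (simp_all add: slope_commute)
    have "(F \<longlongrightarrow> F x) (at_left x)"
      using lift_tendsto filterlim_at_split by blast
    then have "((\<lambda>s. slope F t' s) \<longlongrightarrow> slope F t' x) (at_left x)"
      unfolding slope_def using t' by (intro tendsto_intros) auto
    then have "eventually (\<lambda>s. slope F t' s < y) (at_left x)"
      using t' by (intro order_tendstoD(2)) auto
    moreover have "eventually (\<lambda>s. t' < s \<and> s < x) (at_left x)"
      unfolding eventually_at_left_field using t' by (intro exI[of _ t']) auto
    ultimately show ?thesis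
    proof eventually_elim
      case (elim s)
      then show ?case using left_deriv_le_slope[OF u(1), of t' s] u t' by auto
    qed
  qed
qed

lemma corners_cover_nondiff: "- diff_points F \<subseteq> {x. right_deriv x \<noteq> left_deriv x}"
  using diff_point_if_one_sided_eq(1) by blast

lemma deriv_tendsto_right_deriv:
  "(deriv F \<longlongrightarrow> right_deriv x) (at x within ({x<..} \<inter> diff_points F))"
proof (rule Lim_transform_eventually)
  show "(right_deriv \<longlongrightarrow> right_deriv x) (at x within ({x<..} \<inter> diff_points F))"
    using right_deriv_continuous_from_right by (rule tendsto_within_subset) auto
  show "eventually (\<lambda>t. right_deriv t = deriv F t) (at x within ({x<..} \<inter> diff_points F))"
    by (simp add: eventually_at_filter diff_points_def one_sided_derivs_eq_deriv)
qed

lemma deriv_tendsto_left_deriv: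
  "(deriv F \<longlongrightarrow> left_deriv x) (at x within ({..<x} \<inter> diff_points F))"
proof (rule Lim_transform_eventually)
  show "(left_deriv \<longlongrightarrow> left_deriv x) (at x within ({..<x} \<inter> diff_points F))"
    using left_deriv_continuous_from_left by (rule tendsto_within_subset) auto
  show "eventually (\<lambda>t. left_deriv t = deriv F t) (at x within ({..<x} \<inter> diff_points F))"
    by (simp add: eventually_at_filter diff_points_def one_sided_derivs_eq_deriv)
qed

lemma right_lim_deriv_eq: "right_lim_deriv F x = right_deriv x"
proof -
  have "x islimpt ({x<..} \<inter> diff_points F)"
    by (rule islimpt_subset[OF islimpt_greaterThan_diff_countable[OF countable_corners]])
      (use corners_cover_nondiff in blast)
  then show ?thesis
    unfolding right_lim_deriv_def
    by (intro tendsto_Lim deriv_tendsto_right_deriv) (simp add: trivial_limit_within)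
qed

lemma left_lim_deriv_eq: "left_lim_deriv F x = left_deriv x"
proof -
  have "x islimpt ({..<x} \<inter> diff_points F)"
    by (rule islimpt_subset[OF islimpt_lessThan_diff_countable[OF countable_corners]])
      (use corners_cover_nondiff in blast)
  then show ?thesis
    unfolding left_lim_deriv_def
    by (intro tendsto_Lim deriv_tendsto_left_deriv) (simp add: trivial_limit_within)
qed

lemma jump_deriv_eq: "jump_deriv F x = right_deriv x - left_deriv x"
  unfolding jump_deriv_def right_lim_deriv_eq left_lim_deriv_eq ..

lemma jump_deriv_pos_iff: "{x. jump_deriv F x > 0} = {a0 + of_int k | k. True}"
proof (intro set_eqI iffI)
  fix x assume "x \<in> {x. jump_deriv F x > 0}"
  then have "\<not> right_deriv x \<le> left_deriv x" by (simp add: jump_deriv_eq)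
  then show "x \<in> {a0 + of_int k | k. True}"
    using period_around right_deriv_le_left_deriv by blast
qed (auto simp: jump_deriv_eq right_deriv_break left_deriv_break break_increase)

lemma countable_jump_deriv_neg: "countable {x. jump_deriv F x < 0}"
  by (rule countable_subset[OF _ countable_corners]) (auto simp: jump_deriv_eq)

lemma deriv_continuous_if_no_jump:
  assumes "jump_deriv F x = 0"
  shows "x \<in> diff_points F" and "continuous (at x within diff_points F) (deriv F)"
proof -
  have eq: "right_deriv x = left_deriv x" using assms by (simp add: jump_deriv_eq)
  then show "x \<in> diff_points F" by (rule diff_point_if_one_sided_eq)
  have "(deriv F \<longlongrightarrow> deriv F x) (at x within ({x<..} \<inter> diff_points F))"
    "(deriv F \<longlongrightarrow> deriv F x) (at x within ({..<x} \<inter> diff_points F))"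
    using deriv_tendsto_right_deriv[of x] deriv_tendsto_left_deriv[of x] eq
    by (simp_all add: diff_point_if_one_sided_eq(2))
  then have "(deriv F \<longlongrightarrow> deriv F x) (at x within ({x<..} \<inter> diff_points F \<union> {..<x} \<inter> diff_points F))"
    by (rule Lim_Un)
  moreover have "at x within diff_points F = at x within ({x<..} \<inter> diff_points F \<union> {..<x} \<inter> diff_points F)"
    by (rule at_within_nhd[of _ UNIV]) auto
  ultimately show "continuous (at x within diff_points F) (deriv F)"
    by (simp add: continuous_within)
qed

lemma one_sided_lim_deriv_pos: "right_lim_deriv F x > 0 \<and> left_lim_deriv F x > 0"
  using right_deriv_bounds[of x] left_deriv_bounds[of x] m_pos
  by (simp add: right_lim_deriv_eq left_lim_deriv_eq)

lemma concave_on_open_fundamental: "concave_on {a0<..<a0+1} F"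
  using concave_fundamental unfolding concave_on_def
  by (rule convex_on_subset) auto

lemma ln_deriv_bounded_variation:
  "\<exists>h. (\<forall>x\<in>diff_points F. h x = ln (deriv F x)) \<and> (\<forall>x. h (x + 1) = h x) \<and> bounded_variation_on h 0 1"
proof (intro exI conjI ballI allI)
  let ?h = "\<lambda>x. ln (right_deriv x)"
  show "?h x = ln (deriv F x)" if "x \<in> diff_points F" for x
    using that one_sided_derivs_eq_deriv(1) by (simp add: diff_points_def)
  show "?h (x + 1) = ?h x" for x
    by (simp add: right_deriv_periodic)
  \<comment> \<open>the break point in \<open>(0, 1]\<close>; one in \<open>[0, 1)\<close> would not do, as \<open>right_deriv\<close> jumps up at 1 if \<open>a0 \<in> \<int>\<close>\<close>
  define c where "c = a0 - of_int \<lceil>a0\<rceil> + 1"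
  have c: "0 < c" "c \<le> 1" unfolding c_def by linarith+
  have pos: "0 < right_deriv x" for x
    using right_deriv_bounds[of x] m_pos by linarith
  have "antimono_on {c - 1..<c} right_deriv" "antimono_on {c..<c + 1} right_deriv"
    using right_deriv_antimono[OF concave_on_period[of "- \<lceil>a0\<rceil>"]]
      right_deriv_antimono[OF concave_on_period[of "1 - \<lceil>a0\<rceil>"]]
    by (auto intro!: monotone_onI simp: c_def)
  then have antimono: "antimono_on {c - 1..<c} ?h" "antimono_on {c..<c + 1} ?h"
    by (auto intro!: monotone_onI dest: monotone_onD simp: pos)
  show "bounded_variation_on ?h 0 1"
  proof (rule bounded_variation_on_antimono_pieces)
    show "antimono_on {0..<c} ?h" "antimono_on {c..1} ?h"
      using c by (auto intro: monotone_on_subset[OF antimono(1)] monotone_on_subset[OF antimono(2)])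
    show "\<bar>?h x\<bar> \<le> \<bar>ln m\<bar> + \<bar>ln M\<bar>" for x
      using right_deriv_bounds[of x] m_pos by (smt (verit) ln_le_cancel_iff)
  qed (use c in auto)
qed

end

locale billiard_table =
  fixes b :: "real \<Rightarrow> real" and \<theta> bM :: real
  assumes b_pos: "\<forall>x\<in>{-1/2..1/2}. b x > 0"
    and b_even: "\<forall>x\<in>{-1/2..1/2}. b (- x) = b x"
    and b_concave: "concave_on {-1/2..1/2} b"
    and b_nonconst: "b (1/2) < b 0"
    and b_deriv: "(b has_real_derivative bM) (at (-1/2) within {-1/2..1/2})"
    and \<theta>_low: "arctan bM < \<theta>" and \<theta>_up: "\<theta> < pi/2"
begin

lemma b_right_slope: "(slope b (-1/2) \<longlongrightarrow> bM) (at_right (-1/2))"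
proof -
  have "at (-1/2) within {-1/2..1/2::real} = at_right (-1/2)"
    by (rule at_within_Icc_at_right) simp
  then show ?thesis
    using b_deriv unfolding has_field_derivative_iff by (simp add: slope_def[abs_def])
qed

lemma b_slope_le: "-1/2 \<le> x \<Longrightarrow> x < y \<Longrightarrow> y \<le> 1/2 \<Longrightarrow> slope b x y \<le> bM"
proof -
  assume xy: "-1/2 \<le> x" "x < y" "y \<le> 1/2"
  have "slope b (-1/2) y \<le> bM"
  proof (rule tendsto_lowerbound[OF b_right_slope])
    show "eventually (\<lambda>z. slope b (-1/2) y \<le> slope b (-1/2) z) (at_right (-1/2))"
      unfolding eventually_at_right_field
      using concave_on_slope_antimono[OF b_concave, of "-1/2" _ "-1/2" y] xy
      by (intro exI[of _ y]) auto
  qed simp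
  moreover have "slope b x y \<le> slope b (-1/2) y"
    using concave_on_slope_antimono[OF b_concave, of "-1/2" y x y] xy by auto
  ultimately show ?thesis by simp
qed

lemma b_slope_bounds:
  assumes "-1/2 \<le> x" "x < y" "y \<le> 1/2"
  shows "\<bar>slope b x y\<bar> \<le> bM"
proof -
  have "b (-x) = b x" "b (-y) = b y" using b_even assms by auto
  then have "slope b (-y) (-x) = - ((b y - b x) / (y - x))"
    unfolding slope_def by (simp only: minus_divide_left minus_diff_eq minus_minus diff_minus_eq_add)
      (simp add: algebra_simps)
  then have "slope b x y = - slope b (-y) (-x)"
    unfolding slope_def by simp
  then show ?thesis using b_slope_le[of x y] b_slope_le[of "-y" "-x"] assms by simp
qed

lemma b_ends: "b (-1/2) = b (1/2)"
  using b_even by (auto dest: bspec[of _ _ "1/2"])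

lemma bM_pos: "0 < bM"
  using b_slope_le[of "-1/2" 0] b_nonconst b_ends by (simp add: slope_def)

lemma b_lipschitz: "bM-lipschitz_on {-1/2..1/2} b"
proof (rule lipschitz_onI)
  have *: "dist (b x) (b y) \<le> bM * dist x y" if "x \<in> {-1/2..1/2}" "y \<in> {-1/2..1/2}" "x < y" for x y
    using b_slope_bounds[of x y] that
    by (simp add: slope_def abs_divide divide_le_eq dist_real_def abs_minus_commute)
  show "dist (b x) (b y) \<le> bM * dist x y" if "x \<in> {-1/2..1/2}" "y \<in> {-1/2..1/2}" for x y
    using *[OF that] *[OF that(2,1)] by (cases x y rule: linorder_cases) (auto simp: dist_commute)
qed (use bM_pos in simp)

abbreviation bper :: "real \<Rightarrow> real" where
  "bper \<equiv> per_ext b"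

lemma bper_eq: "X \<in> {-1/2..1/2} \<Longrightarrow> bper X = b X"
  using per_ext_eq[OF b_ends] .

lemma bper_pos: "0 < bper X"
  using per_ext_mem[of b X] b_pos by auto

lemma bper_lipschitz: "bM-lipschitz_on UNIV bper"
proof (rule lipschitz_on_periodic)
  show "bper (x + 1) = bper x" for x by (rule per_ext_periodic)
  show "bM-lipschitz_on {-1/2..-1/2 + 1} bper"
    using b_lipschitz by (simp add: lipschitz_on_def bper_eq)
qed

lemma bper_increment_bound: "\<bar>bper V - bper U\<bar> \<le> bM * \<bar>V - U\<bar>"
  using lipschitz_onD[OF bper_lipschitz, of V U] by (simp add: dist_real_def)

lemma bper_right_slope: "(slope bper (-1/2) \<longlongrightarrow> bM) (at_right (-1/2))"
proof (rule Lim_transform_eventually[OF b_right_slope])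
  show "eventually (\<lambda>t. slope b (-1/2) t = slope bper (-1/2) t) (at_right (-1/2))"
    unfolding eventually_at_right_field by (intro exI[of _ "1/2"]) (auto simp: slope_def bper_eq)
qed

text \<open>Left of the corner \<open>-1/2\<close> the periodic boundary is the reflection of \<open>b\<close> near \<open>-1/2\<close>,
  so its slope from the corner tends to \<open>-bM\<close>.\<close>
lemma bper_left_slope: "(slope bper (-1/2) \<longlongrightarrow> - bM) (at_left (-1/2))"
proof -
  have "((\<lambda>t. - t - 1) \<longlongrightarrow> - (-1/2) - 1) (at_left (-1/2::real))"
    by (intro tendsto_intros)
  moreover have "eventually (\<lambda>t. - t - 1 > -1/2) (at_left (-1/2::real))"
    unfolding eventually_at_left_field by (intro exI[of _ "-1"]) auto
  ultimately have "filterlim (\<lambda>t. - t - 1) (at_right (-1/2)) (at_left (-1/2::real))"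
    by (intro tendsto_imp_filterlim_at_right) simp_all
  from tendsto_minus[OF filterlim_compose[OF b_right_slope this]]
  have "((\<lambda>t. - slope b (-1/2) (- t - 1)) \<longlongrightarrow> - bM) (at_left (-1/2))" .
  moreover have "eventually (\<lambda>t. - slope b (-1/2) (- t - 1) = slope bper (-1/2) t) (at_left (-1/2))"
    unfolding eventually_at_left_field
  proof (intro exI[of _ "-3/2"] conjI allI impI)
    fix t :: real assume t: "-3/2 < t" "t < -1/2"
    have "bper t = bper (t + 1)" using per_ext_periodic[of b t] by simp
    also have "\<dots> = b (- t - 1)" using t b_even bper_eq[of "t + 1"] by (auto dest: bspec[of _ _ "t + 1"])
    moreover have "t + 1/2 \<noteq> 0" "- t - 1 - (-1/2) \<noteq> 0" using t by auto
    ultimately show "- slope b (-1/2) (- t - 1) = slope bper (-1/2) t"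
      using bper_eq[of "-1/2"] unfolding slope_def by (simp add: field_simps)
  qed simp
  ultimately show ?thesis by (rule Lim_transform_eventually)
qed

lemma cot_pos: "0 < cot \<theta>"
  and cot_bM_less_1: "cot \<theta> * bM < 1"
proof -
  have "0 < arctan bM" using bM_pos arctan_less_iff[of 0 bM] by simp
  then have \<theta>: "0 < \<theta>" "\<theta> < pi/2" using \<theta>_low \<theta>_up by linarith+
  then have sin: "0 < sin \<theta>" and cos: "0 < cos \<theta>" by (auto intro: sin_gt_zero cos_gt_zero)
  then show "0 < cot \<theta>" by (simp add: cot_def)
  have "arctan bM < arctan (tan \<theta>)" using \<theta>_low arctan_tan[of \<theta>] \<theta> by simp
  then have "bM * cos \<theta> < sin \<theta>" using cos by (simp add: arctan_less_iff tan_def field_simps)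
  then show "cot \<theta> * bM < 1" using sin by (simp add: cot_def field_simps)
qed

text \<open>The trajectory starting at \<open>(launch X, 0)\<close> hits the upper boundary at abscissa \<open>X\<close>.\<close>
definition launch :: "real \<Rightarrow> real" where
  "launch X = X - bper X * cot \<theta>"

lemma launch_expansion:
  assumes "U \<le> V"
  shows "(1 - cot \<theta> * bM) * (V - U) \<le> launch V - launch U"
proof -
  have "cot \<theta> * (bper V - bper U) \<le> cot \<theta> * (bM * (V - U))"
    using bper_increment_bound[of V U] cot_pos assms by (intro mult_left_mono) auto
  then show ?thesis unfolding launch_def by (simp add: algebra_simps)
qed

lemma launch_strict_mono: "strict_mono launch"
proof (rule strict_monoI)
  fix U V :: real assume "U < V"
  then have "0 < (1 - cot \<theta> * bM) * (V - U)" using cot_bM_less_1 by simp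
  then show "launch U < launch V" using launch_expansion[of U V] \<open>U < V\<close> by simp
qed

lemma launch_surj: "\<exists>X. launch X = x"
proof -
  define V where "V = x + cot \<theta> * bper x / (1 - cot \<theta> * bM)"
  have "x \<le> V" unfolding V_def using cot_pos bper_pos[of x] cot_bM_less_1 by simp
  have "launch x \<le> x" unfolding launch_def using cot_pos bper_pos[of x] by simp
  moreover have "x \<le> launch V"
    using launch_expansion[OF \<open>x \<le> V\<close>] cot_bM_less_1 unfolding V_def launch_def by simp
  moreover have "continuous_on {x..V} launch"
    unfolding launch_def
    by (intro continuous_intros continuous_on_subset[OF lipschitz_on_continuous_on[OF bper_lipschitz]]) auto
  ultimately show ?thesis using IVT'[of launch x x V] \<open>x \<le> V\<close> by blast
qed

abbreviation hit :: "real \<Rightarrow> real" where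
  "hit \<equiv> hit_abscissa b \<theta>"

lemma launch_hit: "launch (hit x) = x"
proof -
  have "\<exists>!X. launch X = x"
    using launch_surj strict_mono_eq[OF launch_strict_mono] by metis
  then show ?thesis unfolding hit_abscissa_def launch_def[symmetric] by (rule theI')
qed

lemma hit_launch: "hit (launch X) = X"
  using launch_hit strict_mono_eq[OF launch_strict_mono] by metis

lemma hit_eq: "hit x = x + cot \<theta> * bper (hit x)"
  using launch_hit[of x] unfolding launch_def by (simp add: algebra_simps)

lemma hit_strict_mono: "strict_mono hit"
  using launch_hit strict_mono_less[OF launch_strict_mono] by (metis strict_monoI)

lemma hit_periodic: "hit (x + 1) = hit x + 1"
proof -
  have "launch (hit x + 1) = x + 1"
    using launch_hit[of x] per_ext_periodic[of b "hit x"] by (simp add: launch_def)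
  then show ?thesis using hit_launch[of "hit x + 1"] by simp
qed

lemma hit_lipschitz: "(1 / (1 - cot \<theta> * bM))-lipschitz_on UNIV hit"
proof (rule lipschitz_onI)
  have gap: "0 < 1 - cot \<theta> * bM" using cot_bM_less_1 by simp
  have *: "hit y - hit x \<le> (y - x) / (1 - cot \<theta> * bM)" if "x \<le> y" for x y
    using launch_expansion[of "hit x" "hit y"] strict_mono_less_eq[OF hit_strict_mono] that gap
    by (simp add: launch_hit field_simps)
  show "dist (hit x) (hit y) \<le> 1 / (1 - cot \<theta> * bM) * dist x y" for x y
    using *[of x y] *[of y x] strict_mono_less_eq[OF hit_strict_mono, of x y]
      strict_mono_less_eq[OF hit_strict_mono, of y x]
    by (cases "x \<le> y") (auto simp: dist_real_def)
qed (use cot_bM_less_1 in simp)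

lemma hit_tendsto: "(hit \<longlongrightarrow> hit x) (at x)"
  using lipschitz_on_continuous_on[OF hit_lipschitz] unfolding continuous_on_def by simp

lemma return_lift_eq: "return_lift b \<theta> x = hit x + cot \<theta> * bper (hit x)"
  unfolding return_lift_def by simp

lemma return_lift_periodic: "return_lift b \<theta> (x + 1) = return_lift b \<theta> x + 1"
  unfolding return_lift_eq hit_periodic per_ext_periodic by simp

definition return_slope :: "real \<Rightarrow> real" where
  "return_slope \<sigma> = (1 + cot \<theta> * \<sigma>) / (1 - cot \<theta> * \<sigma>)"

text \<open>With \<open>U = hit s\<close>, \<open>V = hit t\<close> and \<open>\<sigma>\<close> the slope of the boundary between them,
  \<open>t - s = (1 - \<sigma> cot \<theta>) (V - U)\<close> and \<open>F t - F s = (1 + \<sigma> cot \<theta>) (V - U)\<close>.\<close>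
lemma slope_return_lift:
  assumes "s \<noteq> t"
  shows "slope (return_lift b \<theta>) s t = return_slope (slope bper (hit s) (hit t))"
proof -
  define U V where "U = hit s" and "V = hit t"
  define \<sigma> where "\<sigma> = slope bper U V"
  have "U \<noteq> V" using assms strict_mono_eq[OF hit_strict_mono] unfolding U_def V_def by simp
  then have \<sigma>: "bper V - bper U = \<sigma> * (V - U)" unfolding \<sigma>_def slope_def by simp
  have "return_lift b \<theta> t - return_lift b \<theta> s = (V - U) + cot \<theta> * (bper V - bper U)"
    unfolding return_lift_eq U_def V_def by (simp add: algebra_simps)
  also have "\<dots> = (1 + cot \<theta> * \<sigma>) * (V - U)" unfolding \<sigma> by (simp add: algebra_simps)
  finally have "return_lift b \<theta> t - return_lift b \<theta> s = (1 + cot \<theta> * \<sigma>) * (V - U)" .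
  moreover have "cot \<theta> * (bper V - bper U) = cot \<theta> * bper V - cot \<theta> * bper U"
    by (simp add: algebra_simps)
  then have "t - s = (V - U) - cot \<theta> * (bper V - bper U)"
    using hit_eq[of t] hit_eq[of s] unfolding U_def V_def by linarith
  then have "t - s = (1 - cot \<theta> * \<sigma>) * (V - U)" unfolding \<sigma> by (simp add: algebra_simps)
  ultimately show ?thesis
    using \<open>U \<noteq> V\<close> unfolding slope_def return_slope_def \<sigma>_def U_def V_def by simp
qed

lemma return_slope_mono:
  assumes "\<sigma> \<le> \<tau>" "cot \<theta> * \<tau> < 1"
  shows "return_slope \<sigma> \<le> return_slope \<tau>"
proof -
  have "cot \<theta> * \<sigma> \<le> cot \<theta> * \<tau>" using assms cot_pos by (simp add: mult_left_mono)
  then show ?thesis using assms unfolding return_slope_def by (simp add: field_simps)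
qed

lemma return_slope_bounds: "0 < return_slope (- bM)" "return_slope (- bM) < return_slope bM"
proof -
  have q: "0 < cot \<theta> * bM" "cot \<theta> * bM < 1" using cot_pos bM_pos cot_bM_less_1 by simp_all
  have "return_slope (- bM) = (1 - cot \<theta> * bM) / (1 + cot \<theta> * bM)"
    unfolding return_slope_def by simp
  moreover have "(1 - cot \<theta> * bM) / (1 + cot \<theta> * bM) < 1" "1 < return_slope bM"
    using q unfolding return_slope_def by simp_all
  ultimately show "0 < return_slope (- bM)" "return_slope (- bM) < return_slope bM"
    using q by (simp, linarith)
qed

lemma return_lift_slope_bounds:
  assumes "s < t"
  shows "return_slope (- bM) \<le> slope (return_lift b \<theta>) s t \<and> slope (return_lift b \<theta>) s t \<le> return_slope bM"
proof -
  have "hit s \<noteq> hit t" using assms strict_monoD[OF hit_strict_mono] by fastforce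
  then have "\<bar>slope bper (hit s) (hit t)\<bar> \<le> bM"
    using bper_increment_bound[of "hit t" "hit s"] by (simp add: slope_def abs_divide divide_le_eq)
  moreover have "cot \<theta> * slope bper (hit s) (hit t) \<le> cot \<theta> * bM"
    using calculation cot_pos by (intro mult_left_mono) auto
  ultimately show ?thesis
    unfolding slope_return_lift[OF less_imp_neq[OF assms]]
    using cot_bM_less_1 by (intro conjI return_slope_mono) auto
qed

text \<open>The trajectory from \<open>a0\<close> hits the corner, where the boundary slope jumps from \<open>-bM\<close> to \<open>bM\<close>.\<close>
definition a0 :: real where
  "a0 = launch (-1/2)"

lemma hit_a0: "hit a0 = -1/2"
  unfolding a0_def by (rule hit_launch)

lemma hit_fundamental:
  assumes "x \<in> {a0..a0+1}"
  shows "hit x \<in> {-1/2..1/2}"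
proof -
  have "hit a0 \<le> hit x" "hit x \<le> hit (a0 + 1)"
    using strict_mono_less_eq[OF hit_strict_mono] assms by auto
  then show ?thesis by (simp add: hit_periodic hit_a0)
qed

lemma return_lift_concave: "concave_on {a0..a0+1} (return_lift b \<theta>)"
proof -
  have "concave_on {a0..a0+1} (\<lambda>x. bper (hit x))"
  proof (rule concave_on_implicit[OF b_concave b_lipschitz])
    show "x + cot \<theta> * bper (hit x) \<in> {-1/2..1/2}" if "x \<in> {a0..a0+1}" for x
      using hit_fundamental[OF that] hit_eq[of x] by simp
    show "bper (hit x) = b (x + cot \<theta> * bper (hit x))" if "x \<in> {a0..a0+1}" for x
      using hit_fundamental[OF that] hit_eq[of x] bper_eq by simp
  qed (use cot_pos cot_bM_less_1 in auto)
  then have "concave_on {a0..a0+1} (\<lambda>x. x + 2 * (cot \<theta> * bper (hit x)))"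
    using cot_pos by (intro concave_on_add concave_on_cmul) (auto simp: concave_on_ident)
  moreover have "return_lift b \<theta> x = x + 2 * (cot \<theta> * bper (hit x))" for x
    using return_lift_eq[of x] hit_eq[of x] by linarith
  then have "return_lift b \<theta> = (\<lambda>x. x + 2 * (cot \<theta> * bper (hit x)))" ..
  ultimately show ?thesis by simp
qed

lemma hit_at_right_a0: "filterlim hit (at_right (-1/2)) (at_right a0)"
proof (rule tendsto_imp_filterlim_at_right)
  show "(hit \<longlongrightarrow> -1/2) (at_right a0)"
    using hit_tendsto[of a0] hit_a0 filterlim_at_split by auto
  show "eventually (\<lambda>t. -1/2 < hit t) (at_right a0)"
    using eventually_at_right_less by eventually_elim (metis hit_a0 hit_strict_mono strict_monoD)
qed

lemma hit_at_left_a0: "filterlim hit (at_left (-1/2)) (at_left a0)"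
proof (rule tendsto_imp_filterlim_at_left)
  show "(hit \<longlongrightarrow> -1/2) (at_left a0)"
    using hit_tendsto[of a0] hit_a0 filterlim_at_split by auto
  show "eventually (\<lambda>t. hit t < -1/2) (at_left a0)"
    using eventually_at_left_less by eventually_elim (metis hit_a0 hit_strict_mono strict_monoD)
qed

lemma return_lift_right_slope_a0: "(slope (return_lift b \<theta>) a0 \<longlongrightarrow> return_slope bM) (at_right a0)"
proof (rule Lim_transform_eventually)
  have "((\<lambda>t. slope bper (-1/2) (hit t)) \<longlongrightarrow> bM) (at_right a0)"
    by (rule filterlim_compose[OF bper_right_slope hit_at_right_a0])
  then show "((\<lambda>t. return_slope (slope bper (-1/2) (hit t))) \<longlongrightarrow> return_slope bM) (at_right a0)"
    unfolding return_slope_def using cot_bM_less_1 by (intro tendsto_intros) auto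
  show "eventually (\<lambda>t. return_slope (slope bper (-1/2) (hit t)) = slope (return_lift b \<theta>) a0 t)
      (at_right a0)"
    using eventually_at_right_less by eventually_elim (simp add: slope_return_lift hit_a0)
qed

lemma return_lift_left_slope_a0: "(slope (return_lift b \<theta>) a0 \<longlongrightarrow> return_slope (- bM)) (at_left a0)"
proof (rule Lim_transform_eventually)
  have "((\<lambda>t. slope bper (-1/2) (hit t)) \<longlongrightarrow> - bM) (at_left a0)"
    by (rule filterlim_compose[OF bper_left_slope hit_at_left_a0])
  then show "((\<lambda>t. return_slope (slope bper (-1/2) (hit t))) \<longlongrightarrow> return_slope (- bM)) (at_left a0)"
    unfolding return_slope_def using mult_pos_pos[OF cot_pos bM_pos] by (intro tendsto_intros) auto
  show "eventually (\<lambda>t. return_slope (slope bper (-1/2) (hit t)) = slope (return_lift b \<theta>) a0 t)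
      (at_left a0)"
    using eventually_at_left_less by eventually_elim (simp add: slope_return_lift hit_a0)
qed

lemma concave_lift_return_lift:
  "concave_lift (return_lift b \<theta>) a0 (return_slope (- bM)) (return_slope bM) (return_slope bM) (return_slope (- bM))"
  by unfold_locales (use return_lift_periodic return_lift_concave return_lift_slope_bounds return_slope_bounds
      return_lift_right_slope_a0 return_lift_left_slope_a0 in auto)

end

theorem lemma2p3:
  fixes b :: "real \<Rightarrow> real" and \<theta> bM :: real
  assumes b_pos: "\<forall>x\<in>{-1/2..1/2}. b x > 0"
    and b_even: "\<forall>x\<in>{-1/2..1/2}. b (- x) = b x"
    and b_pC1: "piecewise_C1_on b (-1/2) (1/2)"
    and b_concave: "concave_on {-1/2..1/2} b"
    and b_noninc: "\<forall>x y. 0 \<le> x \<and> x \<le> y \<and> y \<le> 1/2 \<longrightarrow> b y \<le> b x"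
    and b_nonconst: "b (1/2) < b 0"
    and bM: "(b has_real_derivative bM) (at (-1/2) within {-1/2..1/2})"
    and \<theta>_low: "arctan bM < \<theta>" and \<theta>_up: "\<theta> < pi/2"
  defines "F \<equiv> return_lift b \<theta>"
  shows
    "continuous_on UNIV F \<and> strict_mono F \<and> (\<forall>x. F (x + 1) = F x + 1)
     \<and> (\<forall>x. (\<exists>l. (deriv F \<longlongrightarrow> l) (at x within ({x<..} \<inter> diff_points F)))
           \<and> (\<exists>l. (deriv F \<longlongrightarrow> l) (at x within ({..<x} \<inter> diff_points F))))
     \<and> (\<exists>a0. {x. jump_deriv F x > 0} = {a0 + real_of_int k | k. True}
        \<and> countable {x. jump_deriv F x < 0}
        \<and> (\<forall>x. jump_deriv F x = 0 \<longrightarrow>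
              x \<in> diff_points F \<and> continuous (at x within diff_points F) (deriv F))
        \<and> (\<forall>x. right_lim_deriv F x > 0 \<and> left_lim_deriv F x > 0)
        \<and> concave_on {a0<..<a0+1} F
        \<and> (\<exists>h. (\<forall>x\<in>diff_points F. h x = ln (deriv F x)) \<and> (\<forall>x. h (x + 1) = h x)
               \<and> bounded_variation_on h 0 1))"
proof -
  interpret billiard_table b \<theta> bM
    using b_pos b_even b_concave b_nonconst bM \<theta>_low \<theta>_up by unfold_locales
  interpret concave_lift F a0 "return_slope (- bM)" "return_slope bM" "return_slope bM" "return_slope (- bM)"
    unfolding F_def by (rule concave_lift_return_lift)
  show ?thesis
    using lift_continuous lift_strict_mono lift_periodic deriv_tendsto_right_deriv deriv_tendsto_left_deriv
      jump_deriv_pos_iff countable_jump_deriv_neg deriv_continuous_if_no_jump one_sided_lim_deriv_pos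
      concave_on_open_fundamental ln_deriv_bounded_variation by blast
qed

end
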